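(* Let $m,n\ge 1$. For $i=1,\ldots,m$ let $f_i:\mathbb{R}^n\to\mathbb{R}$ be convex and let $h_i:\mathbb{R}^n\to\mathbb{R}$ be convex and differentiable with $\nabla h_i$ Lipschitz continuous with constant $L_i>0$; put $F:=\sum_{i=1}^m(f_i+h_i)$. Let $g:\mathbb{R}^n\to\mathbb{R}$ be convex and differentiable with $\nabla g$ Lipschitz continuous with constant $L_g>0$, and assume $\min g=0$. Let $\mathcal{S}$ be the (assumed nonempty) solution set of $\min\{F(x):x\in\arg\min g\}$. Let $(\alpha_k)_{k\ge1}$, $(\beta_k)_{k\ge1}$ be positive sequences satisfying (H1)–(H4) below, $x_1\in\mathbb{R}^n$, and for $k\ge1$ define $$\varphi_{1,k}:=x_k-\alpha_k\beta_k\nabla g(x_k),\qquad \varphi_{i+1,k}:=\operatorname{prox}_{\alpha_k f_i}\big(\varphi_{i,k}-\alpha_k\nabla h_i(\varphi_{i,k})\big)\ (i=1,\ldots,m),\qquad x_{k+1}:=\varphi_{m+1,k}.$$ (H1) $\partial\big(\sum_{i=1}^m f_i+\delta_{\arg\min g}\big)=\sum_{i=1}^m\partial f_i+N_{\arg\min g}$; (H2) $\sum_k\alpha_k=+\infty$, $\sum_k\alpha_k^2<+\infty$; (H3) $0<\liminf_k\alpha_k\beta_k\le\limsup_k\alpha_k\beta_k<2/L_g$; (H4) for every $p\in\operatorname{ran}(N_{\arg\min g})$, $\sum_k\alpha_k\beta_k[g^*(p/\beta_k)-\sigma_{\arg\min g}(p/\beta_k)]<+\infty$. Let $u\in\mathcal{S}$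 and $p\in N_{\arg\min g}(u)$ be such that $0=p+\sum_{i=1}^m v_i+\sum_{i=1}^m\nabla h_i(u)$, where $v_i\in\partial f_i(u)$ for all $i$. Then for every $k\ge1$ and every $\eta>0$, \begin{align*} &\|x_{k+1}-u\|^2-\|x_k-u\|^2+\tfrac{\eta}{1+\eta}\alpha_k\beta_k g(x_k)+\Big(1-\tfrac{\eta}{1+\eta}\Big)\sum_{i=1}^m\|\varphi_{i+1,k}-\varphi_{i,k}\|^2\\ &\le \alpha_k\Big(\tfrac{2(1+\eta)}{\eta}\alpha_k-\tfrac{2}{\max_{1\le i\le m}L_i}\Big)\sum_{i=1}^m\|\nabla h_i(\varphi_{i,k})-\nabla h_i(u)\|^2\\ &\quad+\Big(\Big(1+\tfrac{\eta}{2(1+\eta)}\Big)\alpha_k\beta_k-\tfrac{2}{L_g(1+\eta)}\Big)\alpha_k\beta_k\|\nabla g(x_k)\|^2\\ &\quad+\tfrac{2m(m+1)(1+\eta)}{\eta}\alpha_k^2\sum_{i=1}^m\|\nabla h_i(u)+v_i\|^2\\ &\quad+\tfrac{\eta}{1+\eta}\alpha_k\beta_k\Big[g^*\Big(\tfrac{2p}{\frac{\eta}{1+\eta}\beta_k}\Big)-\sigma_{\arg\min g}\Big(\tfrac{2p}{\frac{\eta}{1+\eta}\beta_k}\Big)\Big]. \end{align*}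
   Context: For $r>0$ and convex $f$, $\operatorname{prox}_{rf}(x)$ is the unique minimizer of $u\mapsto f(u)+\frac{1}{2r}\|u-x\|^2$. $g^*$ is the Fenchel conjugate of $g$. For a nonempty set $X$, $\delta_X$ is the indicator function, $N_X(x)=\{w:\langle w,y-x\rangle\le0\ \forall y\in X\}$ for $x\in X$ the normal cone, $\operatorname{ran}(N_X)=\bigcup_{x\in X}N_X(x)$, and $\sigma_X(w)=\sup_{y\in X}\langle y,w\rangle$ the support function. $\partial$ is the convex subdifferential. The hypotheses (H1)–(H4) are standing assumptions of the paper. *)

theory Defs
  imports "HOL-Analysis.Analysis"
begin

definition prox :: "real \<Rightarrow> ('a::euclidean_space \<Rightarrow> real) \<Rightarrow> 'a \<Rightarrow> 'a" where
  "prox r f x = (THE u. \<forall>y. f u + (norm (u - x))\<^sup>2 / (2 * r) \<le> f y + (norm (y - x))\<^sup>2 / (2 * r))"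

definition argmin_set :: "('a \<Rightarrow> real) \<Rightarrow> 'a set" where
  "argmin_set g = {x. \<forall>y. g x \<le> g y}"

definition indic :: "'a set \<Rightarrow> 'a \<Rightarrow> ereal" where
  "indic X x = (if x \<in> X then 0 else \<infinity>)"

definition subdiff :: "('a::real_inner \<Rightarrow> ereal) \<Rightarrow> 'a \<Rightarrow> 'a set" where
  "subdiff \<phi> x = {w. \<phi> x < \<infinity> \<and> (\<forall>y. \<phi> x + ereal (w \<bullet> (y - x)) \<le> \<phi> y)}"

definition normal_cone :: "'a::real_inner set \<Rightarrow> 'a \<Rightarrow> 'a set" where
  "normal_cone X x = (if x \<in> X then {w. \<forall>y\<in>X. w \<bullet> (y - x) \<le> 0} else {})"

definition ran_normal_cone :: "'a::real_inner set \<Rightarrow> 'a set" where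
  "ran_normal_cone X = (\<Union>x\<in>X. normal_cone X x)"

definition fconj :: "('a::real_inner \<Rightarrow> real) \<Rightarrow> 'a \<Rightarrow> ereal" where
  "fconj g p = (SUP y. ereal (p \<bullet> y - g y))"

definition support_fun :: "'a::real_inner set \<Rightarrow> 'a \<Rightarrow> ereal" where
  "support_fun X w = (SUP y\<in>X. ereal (y \<bullet> w))"

end

theory Submission
  imports Defs
begin

(*
  Every backward step is controlled by three inequalities: the variational inequality of the
  proximal map, the subgradient inequality for v_i at u, and the cocoercivity
  |Dh z - Dh u|^2 / L <= <Dh z - Dh u, z - u> of an L-Lipschitz gradient of a convex function.
  Summed over the sweep, the distances to u telescope.  By the optimality relation
  p = - sum_i (Dh_i u + v_i) the remaining cross terms become 2 alpha_k <p, x_k - u> plus terms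
  that Young's inequality absorbs into |Dg x_k|^2 and sum_i |phi_(i+1,k) - phi_(i,k)|^2; the
  gradient step on g is handled by the cocoercivity of Dg together with Dg u = 0 and g u = 0.
  Finally, since p is normal to argmin g at u, the support function of argmin g at a positive
  multiple q of p equals <u, q>, so the Fenchel-Young inequality for g bounds
  2 alpha_k <p, x_k - u> - eps alpha_k beta_k g x_k, where eps = eta / (1 + eta).
*)

lemma has_real_derivative_along_line:
  fixes h :: "'a::real_inner \<Rightarrow> real"
  assumes "\<And>y. (h has_derivative (\<lambda>d. Dh y \<bullet> d)) (at y)"
  shows "((\<lambda>t. h (x + t *\<^sub>R d)) has_real_derivative (Dh (x + t *\<^sub>R d) \<bullet> d)) (at t)"
proof -
  have "((\<lambda>t. x + t *\<^sub>R d) has_derivative (\<lambda>s. s *\<^sub>R d)) (at t)"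
    by (auto intro!: derivative_eq_intros)
  from has_derivative_compose[OF this assms]
  have "((\<lambda>t. h (x + t *\<^sub>R d)) has_derivative (\<lambda>s. Dh (x + t *\<^sub>R d) \<bullet> (s *\<^sub>R d))) (at t)" .
  moreover have "(\<lambda>s. Dh (x + t *\<^sub>R d) \<bullet> (s *\<^sub>R d)) = (*) (Dh (x + t *\<^sub>R d) \<bullet> d)"
    by (auto simp: fun_eq_iff)
  ultimately show ?thesis
    by (simp add: has_field_derivative_def)
qed

lemma lipschitz_gradient_upper_bound:
  fixes h :: "'a::real_inner \<Rightarrow> real"
  assumes grad: "\<And>y. (h has_derivative (\<lambda>d. Dh y \<bullet> d)) (at y)"
    and lip: "L-lipschitz_on UNIV Dh"
  shows "h y \<le> h x + Dh x \<bullet> (y - x) + L / 2 * (norm (y - x))\<^sup>2"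
proof -
  define d where "d = y - x"
  define \<rho> where "\<rho> t = h (x + t *\<^sub>R d) - t * (Dh x \<bullet> d) - L / 2 * t\<^sup>2 * (norm d)\<^sup>2" for t
  have "\<rho> 1 \<le> \<rho> 0"
  proof (rule DERIV_nonpos_imp_nonincreasing[of 0 1 \<rho>])
    fix t :: real assume t: "0 \<le> t" "t \<le> 1"
    have D: "(\<rho> has_real_derivative (Dh (x + t *\<^sub>R d) \<bullet> d - Dh x \<bullet> d - L * t * (norm d)\<^sup>2)) (at t)"
      unfolding \<rho>_def
      by (rule derivative_eq_intros has_real_derivative_along_line[OF grad] | simp)+
    have "(Dh (x + t *\<^sub>R d) - Dh x) \<bullet> d \<le> norm (Dh (x + t *\<^sub>R d) - Dh x) * norm d"
      by (rule norm_cauchy_schwarz)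
    also have "\<dots> \<le> L * norm (t *\<^sub>R d) * norm d"
      using lip unfolding lipschitz_on_def
      by (intro mult_right_mono) (metis UNIV_I dist_norm add_diff_cancel_left', simp)
    also have "\<dots> = L * t * (norm d)\<^sup>2"
      using t by (simp add: power2_eq_square)
    finally have "Dh (x + t *\<^sub>R d) \<bullet> d - Dh x \<bullet> d - L * t * (norm d)\<^sup>2 \<le> 0"
      by (simp add: inner_diff_left)
    with D show "\<exists>y. DERIV \<rho> t :> y \<and> y \<le> 0" by blast
  qed simp
  then show ?thesis by (simp add: \<rho>_def d_def)
qed

lemma convex_gradient_inequality:
  fixes h :: "'a::real_inner \<Rightarrow> real"
  assumes cv: "convex_on UNIV h" and grad: "\<And>y. (h has_derivative (\<lambda>d. Dh y \<bullet> d)) (at y)"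
  shows "h x + Dh x \<bullet> (y - x) \<le> h y"
proof -
  define d where "d = y - x"
  define \<psi> where "\<psi> t = h (x + t *\<^sub>R d)" for t
  have "convex_on UNIV \<psi>"
  proof (rule convex_onI)
    fix t s r :: real assume "0 < t" "t < 1"
    moreover have "x + ((1 - t) * s + t * r) *\<^sub>R d = (1 - t) *\<^sub>R (x + s *\<^sub>R d) + t *\<^sub>R (x + r *\<^sub>R d)"
      by (simp add: algebra_simps)
    ultimately show "\<psi> ((1 - t) *\<^sub>R s + t *\<^sub>R r) \<le> (1 - t) * \<psi> s + t * \<psi> r"
      unfolding \<psi>_def using convex_onD[OF cv, of t] by simp
  qed simp
  moreover have "(\<psi> has_real_derivative (Dh x \<bullet> d)) (at 0 within UNIV)"
    unfolding \<psi>_def using has_real_derivative_along_line[OF grad, of x d 0] by simp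
  ultimately have "\<psi> 1 - \<psi> 0 \<ge> (Dh x \<bullet> d) * (1 - 0)"
    by (intro convex_on_imp_above_tangent) auto
  then show ?thesis by (simp add: \<psi>_def d_def)
qed

(* x minimises h - <Dh x, .>; apply the descent lemma to that function at its gradient step from z. *)
lemma convex_lipschitz_gradient_lower_bound:
  fixes h :: "'a::real_inner \<Rightarrow> real"
  assumes cv: "convex_on UNIV h" and grad: "\<And>y. (h has_derivative (\<lambda>d. Dh y \<bullet> d)) (at y)"
    and lip: "L-lipschitz_on UNIV Dh" and L: "L > 0"
  shows "h x + Dh x \<bullet> (z - x) + (norm (Dh z - Dh x))\<^sup>2 / (2 * L) \<le> h z"
proof -
  define \<phi> where "\<phi> w = h w - Dh x \<bullet> w" for w
  define e where "e = Dh z - Dh x"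
  have grad_\<phi>: "(\<phi> has_derivative (\<lambda>d. (Dh w - Dh x) \<bullet> d)) (at w)" for w
    unfolding \<phi>_def inner_diff_left
    by (intro has_derivative_diff grad) (auto intro!: derivative_eq_intros)
  have lip_\<phi>: "L-lipschitz_on UNIV (\<lambda>w. Dh w - Dh x)"
    using lip by (simp add: lipschitz_on_def dist_norm)
  have "\<phi> x \<le> \<phi> w" for w
    using convex_gradient_inequality[OF cv grad, of x w] by (simp add: \<phi>_def inner_diff_right)
  then have "\<phi> x \<le> \<phi> (z - (1/L) *\<^sub>R e)" .
  also have "\<dots> \<le> \<phi> z + e \<bullet> ((z - (1/L) *\<^sub>R e) - z) + L / 2 * (norm ((z - (1/L) *\<^sub>R e) - z))\<^sup>2"
    unfolding e_def by (rule lipschitz_gradient_upper_bound[OF grad_\<phi> lip_\<phi>])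
  also have "\<dots> = \<phi> z - (norm e)\<^sup>2 / (2 * L)"
    using L by (simp add: dot_square_norm power2_eq_square field_simps)
  finally show ?thesis
    by (simp add: \<phi>_def e_def inner_diff_right)
qed

lemma lipschitz_gradient_cocoercive:
  fixes h :: "'a::real_inner \<Rightarrow> real"
  assumes "convex_on UNIV h" and "\<And>y. (h has_derivative (\<lambda>d. Dh y \<bullet> d)) (at y)"
    and "L-lipschitz_on UNIV Dh" and "L > 0"
  shows "(norm (Dh z - Dh x))\<^sup>2 / L \<le> (Dh z - Dh x) \<bullet> (z - x)"
  using convex_lipschitz_gradient_lower_bound[OF assms, of x z]
    convex_lipschitz_gradient_lower_bound[OF assms, of z x] \<open>L > 0\<close>
  by (simp add: norm_minus_commute inner_diff_left inner_diff_right field_simps)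

lemma gradient_zero_at_minimizer:
  fixes g :: "'a::real_inner \<Rightarrow> real"
  assumes "(g has_derivative (\<lambda>d. Dg u \<bullet> d)) (at u)" and "\<And>y. g u \<le> g y"
  shows "Dg u = 0"
proof -
  have "(\<lambda>d. Dg u \<bullet> d) = (\<lambda>d. 0)"
    using assms by (intro has_derivative_local_min) auto
  then show ?thesis by (metis inner_eq_zero_iff)
qed

lemma convex_on_growth_outside_sphere:
  fixes f :: "'a::real_normed_vector \<Rightarrow> real"
  assumes cv: "convex_on UNIV f" and c: "\<And>z. z \<in> sphere x 1 \<Longrightarrow> c \<le> f z"
    and y: "1 \<le> norm (y - x)"
  shows "f x + norm (y - x) * (c - f x) \<le> f y"
proof -
  define t where "t = norm (y - x)"
  have t: "1 \<le> t" using y by (simp add: t_def)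
  define z where "z = (1 - 1/t) *\<^sub>R x + (1/t) *\<^sub>R y"
  have "z - x = (1/t) *\<^sub>R (y - x)" by (simp add: z_def algebra_simps)
  then have "norm (z - x) = 1" using t y by (auto simp: t_def)
  then have "z \<in> sphere x 1" by (simp add: dist_norm norm_minus_commute)
  then have "c \<le> f z" by (rule c)
  also have "f z \<le> (1 - 1/t) * f x + (1/t) * f y"
    unfolding z_def by (rule convex_onD[OF cv]) (use t in auto)
  finally have "t * c \<le> t * ((1 - 1/t) * f x + (1/t) * f y)"
    using t by simp
  moreover have "y \<noteq> x" using y by auto
  ultimately show ?thesis using t by (simp add: t_def algebra_simps)
qed

lemma prox_objective_has_minimizer:
  fixes f :: "'a::euclidean_space \<Rightarrow> real"
  assumes cv: "convex_on UNIV f" and r: "r > 0"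
  shows "\<exists>u. \<forall>y. f u + (norm (u - x))\<^sup>2 / (2 * r) \<le> f y + (norm (y - x))\<^sup>2 / (2 * r)"
proof -
  define \<Phi> where "\<Phi> y = f y + (norm (y - x))\<^sup>2 / (2 * r)" for y
  have cont_f: "continuous_on A f" for A
    using convex_on_continuous[OF open_UNIV cv] continuous_on_subset by blast
  have cont_\<Phi>: "continuous_on A \<Phi>" for A
    unfolding \<Phi>_def by (intro continuous_intros cont_f) (use r in auto)
  obtain c where c: "\<And>z. z \<in> sphere x 1 \<Longrightarrow> c \<le> f z"
    using continuous_attains_inf[OF compact_sphere _ cont_f, of x 1] by fastforce
  define R where "R = 1 + 2 * r * \<bar>c - f x\<bar>"
  have R: "1 \<le> R" using r by (simp add: R_def)
  obtain u where u: "\<And>y. y \<in> cball x R \<Longrightarrow> \<Phi> u \<le> \<Phi> y"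
    using continuous_attains_inf[OF compact_cball _ cont_\<Phi>, of x R] R by fastforce
  have "\<Phi> u \<le> \<Phi> y" for y
  proof (cases "y \<in> cball x R")
    case False
    define t where "t = norm (y - x)"
    have "R < t" using False by (simp add: t_def dist_norm norm_minus_commute)
    then have "\<bar>c - f x\<bar> < t / (2 * r)" using r by (simp add: R_def field_simps)
    then have "0 < t * (c - f x + t / (2 * r))"
      using \<open>R < t\<close> R by (intro mult_pos_pos) auto
    moreover have "f x + t * (c - f x) \<le> f y"
      unfolding t_def using \<open>R < t\<close> R by (intro convex_on_growth_outside_sphere[OF cv c]) (auto simp: t_def)
    ultimately have "\<Phi> x < \<Phi> y"
      by (simp add: \<Phi>_def t_def[symmetric] power2_eq_square algebra_simps add_divide_distrib)
    moreover have "\<Phi> u \<le> \<Phi> x" using u R by simp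
    ultimately show ?thesis by simp
  qed (rule u)
  then show ?thesis unfolding \<Phi>_def by blast
qed

lemma prox_objective_minimizer_unique:
  fixes f :: "'a::real_inner \<Rightarrow> real"
  assumes cv: "convex_on UNIV f" and r: "r > 0"
    and u: "\<forall>y. f u + (norm (u - x))\<^sup>2 / (2 * r) \<le> f y + (norm (y - x))\<^sup>2 / (2 * r)"
    and w: "\<forall>y. f w + (norm (w - x))\<^sup>2 / (2 * r) \<le> f y + (norm (y - x))\<^sup>2 / (2 * r)"
  shows "w = u"
proof -
  define c where "c = (1/2) *\<^sub>R w + (1/2) *\<^sub>R u"
  have "f c \<le> (1/2) * f w + (1/2) * f u"
    using convex_onD[OF cv, of "1/2" w u] by (simp add: c_def)
  moreover have "(norm (c - x))\<^sup>2
      = (1/2) * (norm (w - x))\<^sup>2 + (1/2) * (norm (u - x))\<^sup>2 - (1/4) * (norm (w - u))\<^sup>2"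
    unfolding c_def power2_norm_eq_inner
    by (simp add: inner_diff_left inner_diff_right inner_add_left inner_add_right inner_commute algebra_simps)
  then have "(norm (c - x))\<^sup>2 / (2 * r) = (1/2) * ((norm (w - x))\<^sup>2 / (2 * r))
      + (1/2) * ((norm (u - x))\<^sup>2 / (2 * r)) - (norm (w - u))\<^sup>2 / (8 * r)"
    by (simp add: diff_divide_distrib add_divide_distrib)
  moreover have "f w + (norm (w - x))\<^sup>2 / (2 * r) \<le> f c + (norm (c - x))\<^sup>2 / (2 * r)"
    and "f u + (norm (u - x))\<^sup>2 / (2 * r) \<le> f c + (norm (c - x))\<^sup>2 / (2 * r)"
    using u w by auto
  ultimately have "(norm (w - u))\<^sup>2 / (8 * r) \<le> 0"
    by linarith
  then show ?thesis using r by (simp add: divide_le_0_iff)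
qed

lemma prox_minimizes:
  fixes f :: "'a::euclidean_space \<Rightarrow> real"
  assumes cv: "convex_on UNIV f" and r: "r > 0"
  shows "f (prox r f x) + (norm (prox r f x - x))\<^sup>2 / (2 * r) \<le> f y + (norm (y - x))\<^sup>2 / (2 * r)"
proof -
  define P where "P u \<longleftrightarrow> (\<forall>y. f u + (norm (u - x))\<^sup>2 / (2 * r) \<le> f y + (norm (y - x))\<^sup>2 / (2 * r))" for u
  obtain u where "P u" using prox_objective_has_minimizer[OF cv r, of x] by (auto simp: P_def)
  then have "P (THE u. P u)"
    by (rule theI) (use prox_objective_minimizer_unique[OF cv r] \<open>P u\<close> in \<open>auto simp: P_def\<close>)
  then show ?thesis by (simp add: P_def prox_def)
qed

lemma prox_variational_inequality:
  fixes f :: "'a::euclidean_space \<Rightarrow> real"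
  assumes cv: "convex_on UNIV f" and r: "r > 0"
  shows "(x - prox r f x) \<bullet> (y - prox r f x) \<le> r * (f y - f (prox r f x))"
proof -
  define P where "P = prox r f x"
  define d where "d = y - P"
  define E where "E = r * (f y - f P) - (x - P) \<bullet> d"
  have "0 \<le> E + t * ((norm d)\<^sup>2 / 2)" if t: "0 < t" "t \<le> 1" for t
  proof -
    have "f P + (norm (P - x))\<^sup>2 / (2 * r) \<le> f (P + t *\<^sub>R d) + (norm (P + t *\<^sub>R d - x))\<^sup>2 / (2 * r)"
      unfolding P_def by (rule prox_minimizes[OF cv r])
    moreover have "(norm (P + t *\<^sub>R d - x))\<^sup>2 = (norm (P - x))\<^sup>2 + 2 * t * ((P - x) \<bullet> d) + t\<^sup>2 * (norm d)\<^sup>2"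
      unfolding power2_norm_eq_inner
      by (simp add: inner_diff_left inner_diff_right inner_add_left inner_add_right inner_commute algebra_simps power2_eq_square)
    moreover have "f (P + t *\<^sub>R d) \<le> f P + t * (f y - f P)"
      using convex_onD[OF cv, of t P y] t by (simp add: d_def algebra_simps)
    ultimately have "0 \<le> t * (f y - f P) + (2 * t * ((P - x) \<bullet> d) + t\<^sup>2 * (norm d)\<^sup>2) / (2 * r)"
      by (simp only: add_divide_distrib)
    also have "\<dots> = t / r * (E + t * ((norm d)\<^sup>2 / 2))"
      using r by (simp add: E_def inner_diff_left power2_eq_square field_simps)
    finally show ?thesis using t r by (simp add: zero_le_mult_iff zero_le_divide_iff)
  qed
  then have "0 \<le> E"
    by (intro tendsto_lowerbound[of "\<lambda>t. E + t * ((norm d)\<^sup>2 / 2)" E "at_right 0"])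
      (auto intro!: tendsto_eq_intros simp: eventually_at_right_field exI[of _ 1])
  then show ?thesis by (simp add: E_def P_def d_def)
qed

lemma two_inner_le_Young:
  fixes p q :: "'a::real_inner"
  assumes c: "c > 0"
  shows "2 * (p \<bullet> q) \<le> c * (norm p)\<^sup>2 + (norm q)\<^sup>2 / c"
proof -
  have "0 \<le> (norm (c *\<^sub>R p - q))\<^sup>2 / c" using c by simp
  also have "\<dots> = c * (norm p)\<^sup>2 + (norm q)\<^sup>2 / c - 2 * (p \<bullet> q)"
    using c unfolding power2_norm_eq_inner
    by (simp add: inner_diff_left inner_diff_right inner_commute power2_eq_square field_simps)
  finally show ?thesis by simp
qed

lemma power2_norm_diff_le_sum_steps:
  fixes y :: "nat \<Rightarrow> 'a::real_normed_vector"
  shows "(norm (y n - y 0))\<^sup>2 \<le> real n * (\<Sum>j<n. (norm (y (Suc j) - y j))\<^sup>2)"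
proof -
  have "(norm (y n - y 0))\<^sup>2 \<le> (\<Sum>j<n. norm (y (Suc j) - y j))\<^sup>2"
    unfolding sum_lessThan_telescope[symmetric] by (intro power_mono norm_sum) simp
  also have "\<dots> \<le> (\<Sum>j<n. (norm (y (Suc j) - y j))\<^sup>2) * real n"
    using sum_squared_le_sum_of_squares[of _ "{..<n}"] by simp
  finally show ?thesis by (simp add: mult.commute)
qed

lemma fenchel_young: "ereal (q \<bullet> y - g y) \<le> fconj g q"
  unfolding fconj_def by (rule SUP_upper) simp

lemma normal_cone_scaleR:
  assumes "p \<in> normal_cone C u" and "0 \<le> c"
  shows "c *\<^sub>R p \<in> normal_cone C u"
  using assms by (auto simp: normal_cone_def mult_nonneg_nonpos split: if_splits)

lemma support_fun_normal_cone:
  assumes "u \<in> C" and "p \<in> normal_cone C u"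
  shows "support_fun C p = ereal (u \<bullet> p)"
  unfolding support_fun_def
proof (rule antisym)
  show "(SUP y\<in>C. ereal (y \<bullet> p)) \<le> ereal (u \<bullet> p)"
    using assms by (intro SUP_least) (auto simp: normal_cone_def inner_diff_right inner_commute)
  show "ereal (u \<bullet> p) \<le> (SUP y\<in>C. ereal (y \<bullet> p))"
    using assms(1) by (rule SUP_upper)
qed

lemma normal_cone_fenchel_young:
  assumes "u \<in> C" and "p \<in> normal_cone C u" and s: "0 \<le> s"
  shows "ereal (s * (p \<bullet> (y - u) - g y)) \<le> ereal s * (fconj g p - support_fun C p)"
proof -
  have "ereal (p \<bullet> y - g y) - ereal (u \<bullet> p) \<le> fconj g p - support_fun C p"
    using support_fun_normal_cone[OF assms(1,2)] by (intro ereal_minus_mono fenchel_young) simp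
  then have "ereal s * ereal (p \<bullet> y - g y - u \<bullet> p) \<le> ereal s * (fconj g p - support_fun C p)"
    using s by (intro ereal_mult_left_mono) auto
  then show ?thesis by (simp add: inner_diff_right inner_commute algebra_simps)
qed

lemma gradient_step_estimate:
  fixes g :: "'a::real_inner \<Rightarrow> real"
  assumes cv: "convex_on UNIV g" and grad: "\<And>y. (g has_derivative (\<lambda>d. Dg y \<bullet> d)) (at y)"
    and lip: "Lg-lipschitz_on UNIV Dg" and Lg: "Lg > 0"
    and u: "\<And>y. g u \<le> g y" and \<epsilon>: "0 \<le> \<epsilon>" "\<epsilon> \<le> 1" and t: "0 \<le> t"
  shows "(norm (x - t *\<^sub>R Dg x - u))\<^sup>2 \<le> (norm (x - u))\<^sup>2 - 2 * \<epsilon> * t * (g x - g u)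
           - (2 - \<epsilon>) * t * ((norm (Dg x))\<^sup>2 / Lg) + t\<^sup>2 * (norm (Dg x))\<^sup>2"
proof -
  have Dgu: "Dg u = 0" by (rule gradient_zero_at_minimizer[of g Dg u, OF grad u])
  define G where "G = Dg x"
  define N where "N = (norm G)\<^sup>2 / Lg"
  have "g x - g u + N / 2 \<le> G \<bullet> (x - u)"
    using convex_lipschitz_gradient_lower_bound[OF cv grad lip Lg, of x u]
    by (simp add: Dgu G_def N_def inner_diff_right)
  moreover have "N \<le> G \<bullet> (x - u)"
    using lipschitz_gradient_cocoercive[OF cv grad lip Lg, of x u] by (simp add: Dgu G_def N_def)
  ultimately have "\<epsilon> * (g x - g u + N / 2) + (1 - \<epsilon>) * N \<le> \<epsilon> * (G \<bullet> (x - u)) + (1 - \<epsilon>) * (G \<bullet> (x - u))"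
    using \<epsilon> by (intro add_mono mult_left_mono) auto
  then have "t * (2 * \<epsilon> * (g x - g u) + (2 - \<epsilon>) * N) \<le> t * (2 * (G \<bullet> (x - u)))"
    using t by (intro mult_left_mono) (auto simp: algebra_simps)
  moreover have "(norm (x - t *\<^sub>R G - u))\<^sup>2 = (norm (x - u))\<^sup>2 - t * (2 * (G \<bullet> (x - u))) + t\<^sup>2 * (norm G)\<^sup>2"
    unfolding power2_norm_eq_inner
    by (simp add: inner_diff_left inner_diff_right inner_commute algebra_simps power2_eq_square)
  ultimately show ?thesis
    by (simp add: G_def[symmetric] N_def[symmetric] algebra_simps)
qed

lemma forward_backward_step_estimate:
  fixes f h :: "'a::euclidean_space \<Rightarrow> real"
  assumes f: "convex_on UNIV f" and h: "convex_on UNIV h"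
    and grad: "\<And>y. (h has_derivative (\<lambda>d. Dh y \<bullet> d)) (at y)"
    and lip: "L-lipschitz_on UNIV Dh" and L: "0 < L" "L \<le> L'"
    and v: "\<And>y. f u + v \<bullet> (y - u) \<le> f y"
    and a: "0 < a" and \<epsilon>: "0 < \<epsilon>"
    and y: "y = prox a f (z - a *\<^sub>R Dh z)"
  shows "(norm (y - u))\<^sup>2 - (norm (z - u))\<^sup>2 + (1 - \<epsilon> / 2) * (norm (y - z))\<^sup>2
     \<le> (2 / \<epsilon> * a\<^sup>2 - 2 * a / L') * (norm (Dh z - Dh u))\<^sup>2 + 2 * a * ((Dh u + v) \<bullet> (u - y))"
proof -
  define \<Delta> where "\<Delta> = Dh z - Dh u"
  have "(z - a *\<^sub>R Dh z - y) \<bullet> (u - y) \<le> a * (f u - f y)"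
    unfolding y by (rule prox_variational_inequality[OF f a])
  moreover have "a * (f u - f y) \<le> a * (v \<bullet> (u - y))"
    using v[of y] a by (intro mult_left_mono) (auto simp: inner_diff_right)
  moreover have "a * ((norm \<Delta>)\<^sup>2 / L') \<le> a * (\<Delta> \<bullet> (z - u))"
  proof -
    have "(norm \<Delta>)\<^sup>2 / L' \<le> (norm \<Delta>)\<^sup>2 / L"
      using L by (intro divide_left_mono) auto
    also have "\<dots> \<le> \<Delta> \<bullet> (z - u)"
      unfolding \<Delta>_def by (rule lipschitz_gradient_cocoercive[OF h grad lip L(1)])
    finally show ?thesis using a by (intro mult_left_mono) auto
  qed
  moreover have "2 * ((a *\<^sub>R \<Delta>) \<bullet> (z - y)) \<le> 2 / \<epsilon> * (norm (a *\<^sub>R \<Delta>))\<^sup>2 + (norm (z - y))\<^sup>2 / (2 / \<epsilon>)"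
    using \<epsilon> by (intro two_inner_le_Young) simp
  moreover have "2 * ((z - y) \<bullet> (u - y)) = (norm (y - z))\<^sup>2 + (norm (y - u))\<^sup>2 - (norm (z - u))\<^sup>2"
    unfolding power2_norm_eq_inner by (simp add: inner_diff_left inner_diff_right inner_commute algebra_simps)
  moreover have "(z - a *\<^sub>R Dh z - y) \<bullet> (u - y) = (z - y) \<bullet> (u - y) - a * ((Dh u + v) \<bullet> (u - y))
      + a * (v \<bullet> (u - y)) + a * (\<Delta> \<bullet> (z - u)) - a * (\<Delta> \<bullet> (z - y))"
    by (simp add: \<Delta>_def inner_diff_left inner_diff_right inner_add_left algebra_simps)
  ultimately show ?thesis
    using a by (simp add: \<Delta>_def[symmetric] norm_minus_commute power_mult_distrib algebra_simps)
qed

lemma sweep_cross_terms_bound: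
  fixes X u p :: "'a::real_inner" and P w :: "nat \<Rightarrow> 'a"
  assumes m: "m \<ge> 1" and \<epsilon>: "\<epsilon> > 0" and sum_w: "(\<Sum>i=1..m. w i) = - p"
  shows "2 * a * (\<Sum>i=1..m. w i \<bullet> (u - P (i + 1)))
     \<le> 2 * a * (p \<bullet> (X - u)) + 2 * real m * (real m + 1) / \<epsilon> * a\<^sup>2 * (\<Sum>i=1..m. (norm (w i))\<^sup>2)
       + \<epsilon> / 2 * ((norm (X - P 1))\<^sup>2 + (\<Sum>i=1..m. (norm (P (i + 1) - P i))\<^sup>2))"
proof -
  define A where "A = 2 * real m * (real m + 1) / \<epsilon>"
  define K where "K = (norm (X - P 1))\<^sup>2 + (\<Sum>i=1..m. (norm (P (i + 1) - P i))\<^sup>2)"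
  have A: "A > 0" using m \<epsilon> by (simp add: A_def)
  have K: "K \<ge> 0" by (simp add: K_def sum_nonneg)
  have "(norm (X - P (i + 1)))\<^sup>2 \<le> (real m + 1) * K" if i: "i \<in> {1..m}" for i
  proof -
    define y where "y j = (if j = 0 then X else P j)" for j
    have "(norm (X - P (i + 1)))\<^sup>2 \<le> real (i + 1) * (\<Sum>j<i + 1. (norm (y (Suc j) - y j))\<^sup>2)"
      using power2_norm_diff_le_sum_steps[of y "i + 1"] by (simp add: y_def norm_minus_commute)
    also have "(\<Sum>j<i + 1. (norm (y (Suc j) - y j))\<^sup>2)
        = (norm (X - P 1))\<^sup>2 + (\<Sum>j=1..i. (norm (P (j + 1) - P j))\<^sup>2)"
      unfolding Suc_eq_plus1[symmetric] sum.lessThan_Suc_shift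
      by (simp add: sum.atLeast1_atMost_eq y_def norm_minus_commute)
    also have "\<dots> \<le> K"
      unfolding K_def using i by (intro add_left_mono sum_mono2) auto
    also have "real (i + 1) * K \<le> (real m + 1) * K"
      using i K by (intro mult_right_mono) auto
    finally show ?thesis using i by (simp add: mult_left_mono)
  qed
  then have "2 * a * (w i \<bullet> (X - P (i + 1))) \<le> A * a\<^sup>2 * (norm (w i))\<^sup>2 + (real m + 1) * K / A"
    if "i \<in> {1..m}" for i
    using two_inner_le_Young[OF A, of "a *\<^sub>R w i" "X - P (i + 1)"] divide_right_mono[OF _ less_imp_le[OF A]] that
    by (fastforce simp: power_mult_distrib)
  then have "2 * a * (\<Sum>i=1..m. w i \<bullet> (X - P (i + 1)))
      \<le> (\<Sum>i=1..m. A * a\<^sup>2 * (norm (w i))\<^sup>2 + (real m + 1) * K / A)"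
    unfolding sum_distrib_left by (rule sum_mono)
  also have "\<dots> = A * a\<^sup>2 * (\<Sum>i=1..m. (norm (w i))\<^sup>2) + real m * ((real m + 1) * K / A)"
    by (simp add: sum.distrib sum_distrib_left)
  also have "real m * ((real m + 1) * K / A) = \<epsilon> / 2 * K"
    using m by (simp add: A_def)
  finally have cross: "2 * a * (\<Sum>i=1..m. w i \<bullet> (X - P (i + 1))) \<le> A * a\<^sup>2 * (\<Sum>i=1..m. (norm (w i))\<^sup>2) + \<epsilon> / 2 * K" .
  have "(\<Sum>i=1..m. w i \<bullet> (u - P (i + 1))) = (\<Sum>i=1..m. w i \<bullet> (u - X) + w i \<bullet> (X - P (i + 1)))"
    by (simp add: inner_diff_right)
  also have "\<dots> = (\<Sum>i=1..m. w i) \<bullet> (u - X) + (\<Sum>i=1..m. w i \<bullet> (X - P (i + 1)))"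
    by (simp only: sum.distrib inner_sum_left)
  also have "\<dots> = p \<bullet> (X - u) + (\<Sum>i=1..m. w i \<bullet> (X - P (i + 1)))"
    unfolding sum_w by (simp add: inner_diff_right)
  finally show ?thesis
    using cross by (simp add: A_def K_def distrib_left)
qed

lemma forward_backward_sweep_telescope:
  fixes f h :: "nat \<Rightarrow> 'a::euclidean_space \<Rightarrow> real" and Dh :: "nat \<Rightarrow> 'a \<Rightarrow> 'a"
    and L :: "nat \<Rightarrow> real" and u :: 'a and P v :: "nat \<Rightarrow> 'a"
  assumes f_conv: "\<And>i. i \<in> {1..m} \<Longrightarrow> convex_on UNIV (f i)"
    and h_conv: "\<And>i. i \<in> {1..m} \<Longrightarrow> convex_on UNIV (h i)"
    and h_grad: "\<And>i y. i \<in> {1..m} \<Longrightarrow> (h i has_derivative (\<lambda>d. Dh i y \<bullet> d)) (at y)"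
    and L_pos: "\<And>i. i \<in> {1..m} \<Longrightarrow> L i > 0"
    and h_lip: "\<And>i. i \<in> {1..m} \<Longrightarrow> (L i)-lipschitz_on UNIV (Dh i)"
    and v_sub: "\<And>i y. i \<in> {1..m} \<Longrightarrow> f i u + v i \<bullet> (y - u) \<le> f i y"
    and a: "a > 0" and \<epsilon>: "\<epsilon> > 0"
    and P_step: "\<And>i. i \<in> {1..m} \<Longrightarrow> P (i + 1) = prox a (f i) (P i - a *\<^sub>R Dh i (P i))"
  shows "(norm (P (m + 1) - u))\<^sup>2 - (norm (P 1 - u))\<^sup>2
       + (1 - \<epsilon> / 2) * (\<Sum>i=1..m. (norm (P (i + 1) - P i))\<^sup>2)
     \<le> (2 / \<epsilon> * a\<^sup>2 - 2 * a / Max (L ` {1..m})) * (\<Sum>i=1..m. (norm (Dh i (P i) - Dh i u))\<^sup>2)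
       + 2 * a * (\<Sum>i=1..m. (Dh i u + v i) \<bullet> (u - P (i + 1)))"
proof -
  define Lm where "Lm = Max (L ` {1..m})"
  have "(norm (P (i + 1) - u))\<^sup>2 - (norm (P i - u))\<^sup>2 + (1 - \<epsilon> / 2) * (norm (P (i + 1) - P i))\<^sup>2
      \<le> (2 / \<epsilon> * a\<^sup>2 - 2 * a / Lm) * (norm (Dh i (P i) - Dh i u))\<^sup>2
        + 2 * a * ((Dh i u + v i) \<bullet> (u - P (i + 1)))"
    if i: "i \<in> {1..m}" for i
  proof (rule forward_backward_step_estimate[OF f_conv h_conv h_grad h_lip L_pos _ v_sub a \<epsilon> P_step])
    show "L i \<le> Lm" unfolding Lm_def using i by (intro Max_ge) auto
  qed (use i in auto)
  then have "(\<Sum>i=1..m. (norm (P (i + 1) - u))\<^sup>2 - (norm (P i - u))\<^sup>2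
        + (1 - \<epsilon> / 2) * (norm (P (i + 1) - P i))\<^sup>2)
      \<le> (\<Sum>i=1..m. (2 / \<epsilon> * a\<^sup>2 - 2 * a / Lm) * (norm (Dh i (P i) - Dh i u))\<^sup>2
        + 2 * a * ((Dh i u + v i) \<bullet> (u - P (i + 1))))"
    by (rule sum_mono)
  moreover have "(\<Sum>i=1..m. (norm (P (i + 1) - u))\<^sup>2 - (norm (P i - u))\<^sup>2)
      = (norm (P (m + 1) - u))\<^sup>2 - (norm (P 1 - u))\<^sup>2"
    using sum_Suc_diff[of 1 m "\<lambda>i. (norm (P i - u))\<^sup>2"] by simp
  ultimately show ?thesis
    by (simp add: Lm_def sum.distrib sum_distrib_left)
qed

lemma forward_backward_sweep_estimate:
  fixes f h :: "nat \<Rightarrow> 'a::euclidean_space \<Rightarrow> real" and Dh :: "nat \<Rightarrow> 'a \<Rightarrow> 'a"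
    and L :: "nat \<Rightarrow> real" and g :: "'a \<Rightarrow> real" and Dg :: "'a \<Rightarrow> 'a"
    and X u p :: 'a and P v :: "nat \<Rightarrow> 'a"
  assumes m: "m \<ge> 1"
    and f_conv: "\<And>i. i \<in> {1..m} \<Longrightarrow> convex_on UNIV (f i)"
    and h_conv: "\<And>i. i \<in> {1..m} \<Longrightarrow> convex_on UNIV (h i)"
    and h_grad: "\<And>i y. i \<in> {1..m} \<Longrightarrow> (h i has_derivative (\<lambda>d. Dh i y \<bullet> d)) (at y)"
    and L_pos: "\<And>i. i \<in> {1..m} \<Longrightarrow> L i > 0"
    and h_lip: "\<And>i. i \<in> {1..m} \<Longrightarrow> (L i)-lipschitz_on UNIV (Dh i)"
    and g_conv: "convex_on UNIV g"
    and g_grad: "\<And>y. (g has_derivative (\<lambda>d. Dg y \<bullet> d)) (at y)"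
    and Lg_pos: "Lg > 0"
    and g_lip: "Lg-lipschitz_on UNIV Dg"
    and u_min: "\<And>y. g u \<le> g y"
    and v_sub: "\<And>i y. i \<in> {1..m} \<Longrightarrow> f i u + v i \<bullet> (y - u) \<le> f i y"
    and opt: "0 = p + (\<Sum>i=1..m. v i) + (\<Sum>i=1..m. Dh i u)"
    and a: "a > 0" and b: "b > 0" and \<epsilon>: "0 < \<epsilon>" "\<epsilon> \<le> 1"
    and P1: "P 1 = X - (a * b) *\<^sub>R Dg X"
    and P_step: "\<And>i. i \<in> {1..m} \<Longrightarrow> P (i + 1) = prox a (f i) (P i - a *\<^sub>R Dh i (P i))"
  shows "(norm (P (m + 1) - u))\<^sup>2 - (norm (X - u))\<^sup>2 + 2 * \<epsilon> * a * b * (g X - g u)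
       + (1 - \<epsilon>) * (\<Sum>i=1..m. (norm (P (i + 1) - P i))\<^sup>2)
     \<le> a * (2 / \<epsilon> * a - 2 / Max (L ` {1..m})) * (\<Sum>i=1..m. (norm (Dh i (P i) - Dh i u))\<^sup>2)
       + ((1 + \<epsilon> / 2) * a * b - 2 * (1 - \<epsilon>) / Lg) * a * b * (norm (Dg X))\<^sup>2
       + 2 * real m * (real m + 1) / \<epsilon> * a\<^sup>2 * (\<Sum>i=1..m. (norm (Dh i u + v i))\<^sup>2)
       + 2 * a * (p \<bullet> (X - u))"
proof -
  define Lm where "Lm = Max (L ` {1..m})"
  define w where "w i = Dh i u + v i" for i
  define SD where "SD = (\<Sum>i=1..m. (norm (P (i + 1) - P i))\<^sup>2)"
  define SDD where "SDD = (\<Sum>i=1..m. (norm (Dh i (P i) - Dh i u))\<^sup>2)"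
  define N where "N = (norm (Dg X))\<^sup>2"
  have sweep: "(norm (P (m + 1) - u))\<^sup>2 - (norm (P 1 - u))\<^sup>2 + (1 - \<epsilon> / 2) * SD
      \<le> (2 / \<epsilon> * a\<^sup>2 - 2 * a / Lm) * SDD + 2 * a * (\<Sum>i=1..m. w i \<bullet> (u - P (i + 1)))"
    unfolding Lm_def SD_def SDD_def w_def
    using f_conv h_conv h_grad L_pos h_lip v_sub a \<epsilon>(1) P_step by (rule forward_backward_sweep_telescope)
  have sum_w: "(\<Sum>i=1..m. w i) = - p"
    using opt by (simp add: w_def sum.distrib eq_neg_iff_add_eq_0 ac_simps)
  have norm_P1: "(norm (X - P 1))\<^sup>2 = (a * b)\<^sup>2 * N"
    unfolding P1 N_def using a b by (simp add: power_mult_distrib)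
  have cross: "2 * a * (\<Sum>i=1..m. w i \<bullet> (u - P (i + 1)))
      \<le> 2 * a * (p \<bullet> (X - u)) + 2 * real m * (real m + 1) / \<epsilon> * a\<^sup>2 * (\<Sum>i=1..m. (norm (w i))\<^sup>2)
        + \<epsilon> / 2 * ((a * b)\<^sup>2 * N + SD)"
    unfolding SD_def norm_P1[symmetric] by (rule sweep_cross_terms_bound[OF m \<epsilon>(1) sum_w])
  have grad: "(norm (P 1 - u))\<^sup>2 \<le> (norm (X - u))\<^sup>2 - 2 * \<epsilon> * (a * b) * (g X - g u)
      - (2 - \<epsilon>) * (a * b) * (N / Lg) + (a * b)\<^sup>2 * N"
    unfolding P1 N_def using a b \<epsilon>
    by (intro gradient_step_estimate[OF g_conv g_grad g_lip Lg_pos u_min]) auto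
  have "2 * (1 - \<epsilon>) / Lg * (a * b) * N \<le> (2 - \<epsilon>) * (a * b) * (N / Lg)"
    using a b \<epsilon> Lg_pos by (simp add: N_def field_simps)
  moreover have "a * (2 / \<epsilon> * a - 2 / Lm) * SDD = (2 / \<epsilon> * a\<^sup>2 - 2 * a / Lm) * SDD"
    by (simp add: power2_eq_square algebra_simps)
  moreover have "((1 + \<epsilon> / 2) * a * b - 2 * (1 - \<epsilon>) / Lg) * a * b * N
      = (a * b)\<^sup>2 * N + \<epsilon> / 2 * ((a * b)\<^sup>2 * N) - 2 * (1 - \<epsilon>) / Lg * (a * b) * N"
    by (simp add: power2_eq_square algebra_simps)
  moreover have "(1 - \<epsilon>) * SD = (1 - \<epsilon> / 2) * SD - \<epsilon> / 2 * SD"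
    by (simp add: algebra_simps)
  moreover have "2 * \<epsilon> * a * b * (g X - g u) = 2 * \<epsilon> * (a * b) * (g X - g u)"
    by (simp add: mult.assoc)
  moreover have "\<epsilon> / 2 * ((a * b)\<^sup>2 * N + SD) = \<epsilon> / 2 * ((a * b)\<^sup>2 * N) + \<epsilon> / 2 * SD"
    by (simp add: distrib_left)
  ultimately show ?thesis
    unfolding Lm_def[symmetric] SD_def[symmetric] SDD_def[symmetric] N_def[symmetric] w_def[symmetric]
    using sweep cross grad by argo
qed

theorem lemmaA1:
  fixes m :: nat
    and f h :: "nat \<Rightarrow> 'a::euclidean_space \<Rightarrow> real"
    and Dh :: "nat \<Rightarrow> 'a \<Rightarrow> 'a"
    and L :: "nat \<Rightarrow> real"
    and g :: "'a \<Rightarrow> real" and Dg :: "'a \<Rightarrow> 'a" and Lg :: real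
    and \<alpha> \<beta> :: "nat \<Rightarrow> real"
    and x :: "nat \<Rightarrow> 'a" and \<phi> :: "nat \<Rightarrow> nat \<Rightarrow> 'a"
    and u p :: 'a and v :: "nat \<Rightarrow> 'a"
  assumes m: "m \<ge> 1"
    and f_conv: "\<And>i. i \<in> {1..m} \<Longrightarrow> convex_on UNIV (f i)"
    and h_conv: "\<And>i. i \<in> {1..m} \<Longrightarrow> convex_on UNIV (h i)"
    and h_grad: "\<And>i y. i \<in> {1..m} \<Longrightarrow> (h i has_derivative (\<lambda>d. Dh i y \<bullet> d)) (at y)"
    and L_pos: "\<And>i. i \<in> {1..m} \<Longrightarrow> L i > 0"
    and h_lip: "\<And>i. i \<in> {1..m} \<Longrightarrow> (L i)-lipschitz_on UNIV (Dh i)"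
    and g_conv: "convex_on UNIV g"
    and g_grad: "\<And>y. (g has_derivative (\<lambda>d. Dg y \<bullet> d)) (at y)"
    and Lg_pos: "Lg > 0"
    and g_lip: "Lg-lipschitz_on UNIV Dg"
    and g_min: "(\<exists>y. g y = 0) \<and> (\<forall>y. 0 \<le> g y)"
    and S_ne: "{z \<in> argmin_set g. \<forall>y \<in> argmin_set g.
                 (\<Sum>i=1..m. f i z + h i z) \<le> (\<Sum>i=1..m. f i y + h i y)} \<noteq> {}"
    and \<alpha>_pos: "\<And>k. k \<ge> 1 \<Longrightarrow> \<alpha> k > 0"
    and \<beta>_pos: "\<And>k. k \<ge> 1 \<Longrightarrow> \<beta> k > 0"
    and H1: "\<And>z. subdiff (\<lambda>y. ereal (\<Sum>i=1..m. f i y) + indic (argmin_set g) y) z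
               = {(\<Sum>i=1..m. w i) + q | w q.
                    (\<forall>i\<in>{1..m}. w i \<in> subdiff (\<lambda>y. ereal (f i y)) z)
                    \<and> q \<in> normal_cone (argmin_set g) z}"
    and H2a: "\<not> summable (\<lambda>k. \<alpha> (Suc k))"
    and H2b: "summable (\<lambda>k. (\<alpha> (Suc k))\<^sup>2)"
    and H3a: "0 < liminf (\<lambda>k. ereal (\<alpha> k * \<beta> k))"
    and H3b: "limsup (\<lambda>k. ereal (\<alpha> k * \<beta> k)) < ereal (2 / Lg)"
    and H4: "\<And>q. q \<in> ran_normal_cone (argmin_set g) \<Longrightarrow>
               (\<Sum>k. ereal (\<alpha> (Suc k) * \<beta> (Suc k)) *
                  (fconj g ((1 / \<beta> (Suc k)) *\<^sub>R q)
                   - support_fun (argmin_set g) ((1 / \<beta> (Suc k)) *\<^sub>R q))) < \<infinity>"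
    and phi1: "\<And>k. k \<ge> 1 \<Longrightarrow> \<phi> 1 k = x k - (\<alpha> k * \<beta> k) *\<^sub>R Dg (x k)"
    and phi_step: "\<And>i k. k \<ge> 1 \<Longrightarrow> i \<in> {1..m} \<Longrightarrow>
               \<phi> (i + 1) k = prox (\<alpha> k) (f i) (\<phi> i k - \<alpha> k *\<^sub>R Dh i (\<phi> i k))"
    and x_step: "\<And>k. k \<ge> 1 \<Longrightarrow> x (k + 1) = \<phi> (m + 1) k"
    and u_S: "u \<in> argmin_set g"
    and u_min: "\<forall>y \<in> argmin_set g. (\<Sum>i=1..m. f i u + h i u) \<le> (\<Sum>i=1..m. f i y + h i y)"
    and p_N: "p \<in> normal_cone (argmin_set g) u"
    and v_sub: "\<And>i. i \<in> {1..m} \<Longrightarrow> v i \<in> subdiff (\<lambda>y. ereal (f i y)) u"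
    and opt: "0 = p + (\<Sum>i=1..m. v i) + (\<Sum>i=1..m. Dh i u)"
  shows "\<forall>k \<ge> 1. \<forall>\<eta> > 0.
    ereal ((norm (x (k + 1) - u))\<^sup>2 - (norm (x k - u))\<^sup>2
       + \<eta> / (1 + \<eta>) * \<alpha> k * \<beta> k * g (x k)
       + (1 - \<eta> / (1 + \<eta>)) * (\<Sum>i=1..m. (norm (\<phi> (i + 1) k - \<phi> i k))\<^sup>2))
    \<le> ereal (\<alpha> k * (2 * (1 + \<eta>) / \<eta> * \<alpha> k - 2 / Max (L ` {1..m}))
               * (\<Sum>i=1..m. (norm (Dh i (\<phi> i k) - Dh i u))\<^sup>2)
          + ((1 + \<eta> / (2 * (1 + \<eta>))) * \<alpha> k * \<beta> k - 2 / (Lg * (1 + \<eta>)))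
               * \<alpha> k * \<beta> k * (norm (Dg (x k)))\<^sup>2
          + 2 * real m * (real m + 1) * (1 + \<eta>) / \<eta> * (\<alpha> k)\<^sup>2
               * (\<Sum>i=1..m. (norm (Dh i u + v i))\<^sup>2))
      + ereal (\<eta> / (1 + \<eta>) * \<alpha> k * \<beta> k)
          * (fconj g ((2 / (\<eta> / (1 + \<eta>) * \<beta> k)) *\<^sub>R p)
             - support_fun (argmin_set g) ((2 / (\<eta> / (1 + \<eta>) * \<beta> k)) *\<^sub>R p))"
proof (intro allI impI, goal_cases)
  case (1 k \<eta>)
  define \<epsilon> where "\<epsilon> = \<eta> / (1 + \<eta>)"
  have \<epsilon>: "0 < \<epsilon>" "\<epsilon> \<le> 1" using 1 by (auto simp: \<epsilon>_def)
  have a: "\<alpha> k > 0" and b: "\<beta> k > 0" using 1 \<alpha>_pos \<beta>_pos by auto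
  have g_u: "g u \<le> g y" for y using u_S by (simp add: argmin_set_def)
  then have "g u = 0" using g_min by (metis order_antisym)
  have sweep: "(norm (x (k + 1) - u))\<^sup>2 - (norm (x k - u))\<^sup>2 + 2 * \<epsilon> * \<alpha> k * \<beta> k * (g (x k) - g u)
       + (1 - \<epsilon>) * (\<Sum>i=1..m. (norm (\<phi> (i + 1) k - \<phi> i k))\<^sup>2)
     \<le> \<alpha> k * (2 / \<epsilon> * \<alpha> k - 2 / Max (L ` {1..m})) * (\<Sum>i=1..m. (norm (Dh i (\<phi> i k) - Dh i u))\<^sup>2)
       + ((1 + \<epsilon> / 2) * \<alpha> k * \<beta> k - 2 * (1 - \<epsilon>) / Lg) * \<alpha> k * \<beta> k * (norm (Dg (x k)))\<^sup>2
       + 2 * real m * (real m + 1) / \<epsilon> * (\<alpha> k)\<^sup>2 * (\<Sum>i=1..m. (norm (Dh i u + v i))\<^sup>2)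
       + 2 * \<alpha> k * (p \<bullet> (x k - u))"
    unfolding x_step[OF 1(1)]
    using v_sub phi1 phi_step 1(1)
    by (intro forward_backward_sweep_estimate[OF m f_conv h_conv h_grad L_pos h_lip g_conv g_grad Lg_pos g_lip g_u _ opt a b \<epsilon>])
      (auto simp: subdiff_def)
  have fenchel: "ereal (\<epsilon> * \<alpha> k * \<beta> k * ((2 / (\<epsilon> * \<beta> k)) *\<^sub>R p \<bullet> (x k - u) - g (x k)))
      \<le> ereal (\<epsilon> * \<alpha> k * \<beta> k) * (fconj g ((2 / (\<epsilon> * \<beta> k)) *\<^sub>R p)
           - support_fun (argmin_set g) ((2 / (\<epsilon> * \<beta> k)) *\<^sub>R p))"
    using \<epsilon> a b by (intro normal_cone_fenchel_young[OF u_S] normal_cone_scaleR[OF p_N]) auto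
  have fenchel_lhs: "\<epsilon> * \<alpha> k * \<beta> k * ((2 / (\<epsilon> * \<beta> k)) *\<^sub>R p \<bullet> (x k - u) - g (x k))
      = 2 * \<alpha> k * (p \<bullet> (x k - u)) - \<epsilon> * \<alpha> k * \<beta> k * g (x k)"
    using \<epsilon> b by (simp add: field_simps)
  have g_term: "2 * \<epsilon> * \<alpha> k * \<beta> k * (g (x k) - g u) = 2 * (\<epsilon> * \<alpha> k * \<beta> k * g (x k))"
    using \<open>g u = 0\<close> by simp
  have coefficients: "2 * (1 + \<eta>) / \<eta> = 2 / \<epsilon>" "\<eta> / (2 * (1 + \<eta>)) = \<epsilon> / 2"
    "2 / (Lg * (1 + \<eta>)) = 2 * (1 - \<epsilon>) / Lg"
    "2 * real m * (real m + 1) * (1 + \<eta>) / \<eta> = 2 * real m * (real m + 1) / \<epsilon>"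
    using 1(2) by (simp_all add: \<epsilon>_def field_simps)
  show ?case
    unfolding coefficients \<epsilon>_def[symmetric]
    by (rule order_trans[OF _ add_left_mono[OF fenchel]], unfold plus_ereal.simps(1) ereal_less_eq(3))
      (use sweep fenchel_lhs g_term in linarith)
qed

end
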